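(* Let $F$ be a smooth symmetric 2-cotensor on the unit sphere $\mathbb{S}^{n-1}\subset\mathbb{R}^n$, and write $F(x,V,V)$ for its value at $x\in\mathbb{S}^{n-1}$ on $V\in T_x\mathbb{S}^{n-1}$. Suppose there is $k\in\mathbb{N}$ such that for every unit speed great-circle geodesic $\gamma$ of $\mathbb{S}^{n-1}$, $$I_k(F,\gamma)=\int_0^\pi F(\gamma(t),\gamma'(t),\gamma'(t))(\sin t)^k\,dt=0.$$ Then (i) $F$ has the parity of $k$: for every such $\gamma$ and all $t$, $F(\gamma(t),\gamma'(t),\gamma'(t))=(-1)^kF(\gamma(t+\pi),\gamma'(t+\pi),\gamma'(t+\pi))$; (ii) for every such $\gamma$ and every polynomial $p$ on $\mathbb{R}^n$ of degree at most $k$, $$\int_0^{2\pi}p(\gamma(t))\,F(\gamma(t),\gamma'(t),\gamma'(t))\,dt=0.$$ *)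

theory Defs
  imports "HOL-Analysis.Analysis"
begin

coinductive smooth_fun :: "(real^'n \<Rightarrow> real) \<Rightarrow> bool" where
  "(\<And>x. f differentiable (at x)) \<Longrightarrow>
   (\<And>i. smooth_fun (\<lambda>x. frechet_derivative f (at x) (axis i 1))) \<Longrightarrow>
   smooth_fun f"

definition smooth_sym_cotensor_sphere :: "(real^'n \<Rightarrow> real^'n \<Rightarrow> real^'n \<Rightarrow> real) \<Rightarrow> bool" where
  "smooth_sym_cotensor_sphere F \<longleftrightarrow>
     (\<exists>f :: 'n \<Rightarrow> 'n \<Rightarrow> real^'n \<Rightarrow> real.
        (\<forall>i j. smooth_fun (f i j)) \<and> (\<forall>i j. f i j = f j i) \<and>
        (\<forall>x \<in> sphere 0 1. \<forall>u v. u \<bullet> x = 0 \<longrightarrow> v \<bullet> x = 0 \<longrightarrow>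
            F x u v = (\<Sum>i\<in>UNIV. \<Sum>j\<in>UNIV. f i j x * u$i * v$j)))"

definition geod :: "real^'n \<Rightarrow> real^'n \<Rightarrow> real \<Rightarrow> real^'n" where
  "geod u v t = cos t *\<^sub>R u + sin t *\<^sub>R v"

definition geod' :: "real^'n \<Rightarrow> real^'n \<Rightarrow> real \<Rightarrow> real^'n" where
  "geod' u v t = (- sin t) *\<^sub>R u + cos t *\<^sub>R v"

definition orthonormal2 :: "real^'n \<Rightarrow> real^'n \<Rightarrow> bool" where
  "orthonormal2 u v \<longleftrightarrow> norm u = 1 \<and> norm v = 1 \<and> u \<bullet> v = 0"

definition poly_fun_deg :: "nat \<Rightarrow> (real^'n \<Rightarrow> real) \<Rightarrow> bool" where
  "poly_fun_deg k p \<longleftrightarrow>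
     (\<exists>c :: ('n \<Rightarrow> nat) \<Rightarrow> real.
        p = (\<lambda>x. \<Sum>\<alpha>\<in>{\<alpha> :: 'n \<Rightarrow> nat. sum \<alpha> UNIV \<le> k}. c \<alpha> * (\<Prod>i\<in>UNIV. (x$i) ^ \<alpha> i)))"

end

theory Submission
  imports Defs
begin

text \<open>Along a great circle, F(gamma, gamma', gamma') is a continuous function phi of the arc
  parameter, and moving the base point along the circle turns the hypothesis into: every
  translate of phi has vanishing k-th sine moment, i.e. the integral of phi(t + s) (sin t)^k over
  [0, pi] is zero for all s. Differentiating in s and integrating by parts lowers the exponent by
  two; at exponent 0 or 1 this gives phi(s + pi) = (-1)^k phi(s). Hence phi integrates to zero over
  the whole circle against (sin (t + s))^m for every m <= k of the parity of k, and expanding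
  binomially in s gives the same for every monomial (cos t)^a (sin t)^b with a + b = m; monomials
  of the other parity are killed by the parity of phi. A polynomial of degree at most k restricted
  to the great circle is a combination of such monomials.\<close>

lemma continuous_on_UNIV_antiderivative:
  fixes f :: "real \<Rightarrow> real"
  assumes "continuous_on UNIV f"
  obtains F where "\<And>x. (F has_real_derivative f x) (at x)"
proof -
  have "\<exists>F. \<forall>x::real. -\<infinity> < ereal x \<longrightarrow> ereal x < \<infinity> \<longrightarrow> (F has_vector_derivative f x) (at x)"
    by (rule einterval_antiderivative)
      (use assms in \<open>auto simp: continuous_on_eq_continuous_at\<close>)
  then show ?thesis
    using that by (auto simp: has_real_derivative_iff_has_vector_derivative)
qed

lemma has_real_derivative_integral_shift:
  fixes \<phi> w w' :: "real \<Rightarrow> real"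
  assumes \<phi>: "continuous_on UNIV \<phi>"
    and w: "\<And>t. (w has_real_derivative w' t) (at t)" and w': "continuous_on UNIV w'"
    and "0 \<le> b"
  shows "((\<lambda>s. integral {0..b} (\<lambda>t. \<phi> (t + s) * w t)) has_real_derivative
           \<phi> (s + b) * w b - \<phi> s * w 0 - integral {0..b} (\<lambda>t. \<phi> (t + s) * w' t)) (at s)"
proof -
  obtain \<psi> where \<psi>: "\<And>x. (\<psi> has_real_derivative \<phi> x) (at x)"
    using continuous_on_UNIV_antiderivative[OF \<phi>] by blast
  have \<psi>_continuous: "continuous_on UNIV \<psi>"
    using \<psi> by (meson DERIV_continuous continuous_at_imp_continuous_on)
  have w_continuous: "continuous_on UNIV w"
    using w by (meson DERIV_continuous continuous_at_imp_continuous_on)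
  note [derivative_intros] = DERIV_chain2[OF \<psi>] DERIV_chain2[OF w]
  note [continuous_intros] = continuous_on_compose2[OF \<phi>] continuous_on_compose2[OF \<psi>_continuous]
    continuous_on_compose2[OF w_continuous] continuous_on_compose2[OF w']
  txt \<open>Integration by parts moves the shift onto the antiderivative \<open>\<psi>\<close> of \<open>\<phi>\<close>, where
    it can be differentiated under the integral sign although \<open>\<phi>\<close> is merely continuous.\<close>
  have by_parts: "integral {0..b} (\<lambda>t. \<phi> (t + s) * w t) =
      \<psi> (b + s) * w b - \<psi> s * w 0 - integral {0..b} (\<lambda>t. \<psi> (t + s) * w' t)" for s
  proof -
    have ftc: "((\<lambda>t. \<phi> (t + s) * w t + \<psi> (t + s) * w' t) has_integral
            \<psi> (b + s) * w b - \<psi> (0 + s) * w 0) {0..b}"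
    proof (rule fundamental_theorem_of_calculus)
      fix t
      show "((\<lambda>t. \<psi> (t + s) * w t) has_vector_derivative \<phi> (t + s) * w t + \<psi> (t + s) * w' t)
              (at t within {0..b})"
        unfolding has_real_derivative_iff_has_vector_derivative[symmetric]
        by (auto intro!: derivative_eq_intros)
    qed (use \<open>0 \<le> b\<close> in simp)
    have "(\<lambda>t. \<phi> (t + s) * w t) integrable_on {0..b}"
      "(\<lambda>t. \<psi> (t + s) * w' t) integrable_on {0..b}"
      by (auto intro!: integrable_continuous_interval continuous_intros)
    from integral_add[OF this] show ?thesis
      using integral_unique[OF ftc] by simp
  qed
  have "((\<lambda>s. integral (cbox 0 b) (\<lambda>t. \<psi> (t + s) * w' t)) has_real_derivative
          integral (cbox 0 b) (\<lambda>t. \<phi> (t + s) * w' t)) (at s within UNIV)"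
    by (rule leibniz_rule_field_derivative)
      (auto intro!: derivative_eq_intros integrable_continuous_interval continuous_intros
        simp: case_prod_unfold)
  then have "((\<lambda>s. \<psi> (b + s) * w b - \<psi> s * w 0 - integral {0..b} (\<lambda>t. \<psi> (t + s) * w' t))
      has_real_derivative \<phi> (b + s) * w b - \<phi> s * w 0 - integral {0..b} (\<lambda>t. \<phi> (t + s) * w' t)) (at s)"
    by (auto intro!: derivative_eq_intros)
  moreover have "(\<lambda>s. integral {0..b} (\<lambda>t. \<phi> (t + s) * w t)) =
      (\<lambda>s. \<psi> (b + s) * w b - \<psi> s * w 0 - integral {0..b} (\<lambda>t. \<psi> (t + s) * w' t))"
    using by_parts by blast
  ultimately show ?thesis
    by (simp add: add.commute[of b])
qed

lemma integral_deriv_weight_eq_boundary: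
  fixes \<phi> w w' :: "real \<Rightarrow> real"
  assumes "continuous_on UNIV \<phi>"
    and "\<And>t. (w has_real_derivative w' t) (at t)" and "continuous_on UNIV w'"
    and "0 \<le> b"
    and vanish: "\<And>s. integral {0..b} (\<lambda>t. \<phi> (t + s) * w t) = 0"
  shows "integral {0..b} (\<lambda>t. \<phi> (t + s) * w' t) = \<phi> (s + b) * w b - \<phi> s * w 0"
proof -
  have "((\<lambda>s. 0) has_real_derivative
          \<phi> (s + b) * w b - \<phi> s * w 0 - integral {0..b} (\<lambda>t. \<phi> (t + s) * w' t)) (at s)"
    using has_real_derivative_integral_shift[OF assms(1-4)] by (simp add: vanish)
  from DERIV_unique[OF this DERIV_const] show ?thesis
    by simp
qed

lemma integral_periodic_shift:
  fixes h :: "real \<Rightarrow> real"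
  assumes "continuous_on UNIV h" and periodic: "\<And>t. h (t + T) = h t" and "0 \<le> T"
  shows "integral {0..T} (\<lambda>t. h (t + s)) = integral {0..T} h"
proof -
  have "((\<lambda>s. integral {0..T} (\<lambda>t. h (t + s) * 1)) has_real_derivative
          h (s + T) * 1 - h s * 1 - integral {0..T} (\<lambda>t. h (t + s) * 0)) (at s)" for s
    by (rule has_real_derivative_integral_shift)
      (use assms in \<open>auto intro!: derivative_eq_intros\<close>)
  then have "\<forall>s. ((\<lambda>s. integral {0..T} (\<lambda>t. h (t + s))) has_real_derivative 0) (at s)"
    by (simp add: periodic)
  from DERIV_isconst_all[OF this, of s 0] show ?thesis
    by simp
qed

lemma integral_two_pi_half_turn:
  fixes g :: "real \<Rightarrow> real"
  assumes "continuous_on UNIV g" and "\<And>t. g (t + pi) = c * g t"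
  shows "integral {0..2*pi} g = (1 + c) * integral {0..pi} g"
proof -
  have "integral {0..2*pi} g = integral {0..pi} g + integral {pi..2*pi} g"
    by (rule Henstock_Kurzweil_Integration.integral_combine[symmetric])
      (use assms(1) in \<open>auto intro!: integrable_continuous_interval intro: continuous_on_subset\<close>)
  also have "integral {pi..2*pi} g = integral {pi-pi..2*pi-pi} (\<lambda>t. g (t + pi))"
    by (rule integral_shift_real_ivl[symmetric])
  also have "\<dots> = c * integral {0..pi} g"
    by (simp add: assms(2))
  finally show ?thesis
    by (simp add: algebra_simps)
qed

lemma sin_moment_descent:
  fixes \<phi> :: "real \<Rightarrow> real"
  assumes \<phi>: "continuous_on UNIV \<phi>"
    and vanish: "\<And>s. integral {0..pi} (\<lambda>t. \<phi> (t + s) * sin t ^ (j + 2)) = 0"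
  shows "integral {0..pi} (\<lambda>t. \<phi> (t + s) * sin t ^ j) = 0"
proof -
  have integral_scale: "integral {0..pi} (\<lambda>t. \<phi> (t + s) * (c * g t)) =
      c * integral {0..pi} (\<lambda>t. \<phi> (t + s) * g t)" for c s and g :: "real \<Rightarrow> real"
    by (simp add: mult.left_commute[of _ c])
  have d_sin_power:
    "((\<lambda>t. sin t ^ (n + 1)) has_real_derivative real (n + 1) * (sin t ^ n * cos t)) (at t)" for n t
    using DERIV_power[OF DERIV_sin, where n = "n + 1" and x = t] by (simp add: mult.commute)
  have "integral {0..pi} (\<lambda>t. \<phi> (t + s) * (real (j + 2) * (sin t ^ (j + 1) * cos t))) =
      \<phi> (s + pi) * sin pi ^ (j + 2) - \<phi> s * sin 0 ^ (j + 2)" for s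
    by (rule integral_deriv_weight_eq_boundary[OF \<phi> _ _ _ vanish])
      (use d_sin_power[of "j + 1"] in \<open>auto intro!: continuous_intros\<close>)
  then have vanish_sin_cos:
    "integral {0..pi} (\<lambda>t. \<phi> (t + s) * (sin t ^ (j + 1) * cos t)) = 0" for s
    by (simp only: integral_scale) (simp add: mult.commute)
  have "integral {0..pi} (\<lambda>t. \<phi> (t + s) *
          (real (j + 1) * sin t ^ j - real (j + 2) * sin t ^ (j + 2))) =
      \<phi> (s + pi) * (sin pi ^ (j + 1) * cos pi) - \<phi> s * (sin 0 ^ (j + 1) * cos 0)"
  proof (rule integral_deriv_weight_eq_boundary[OF \<phi> _ _ _ vanish_sin_cos])
    fix t :: real
    have "real (j + 1) * (sin t ^ j * cos t) * cos t + - sin t * sin t ^ (j + 1) =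
        real (j + 1) * sin t ^ j * (cos t)\<^sup>2 - sin t ^ j * (sin t)\<^sup>2"
      by (simp add: power2_eq_square algebra_simps)
    also have "\<dots> = real (j + 1) * sin t ^ j * (1 - (sin t)\<^sup>2) - sin t ^ j * (sin t)\<^sup>2"
      by (simp only: cos_squared_eq)
    also have "\<dots> = real (j + 1) * sin t ^ j - real (j + 2) * sin t ^ (j + 2)"
      by (simp add: power_add power2_eq_square algebra_simps)
    finally show "((\<lambda>t. sin t ^ (j + 1) * cos t) has_real_derivative
        real (j + 1) * sin t ^ j - real (j + 2) * sin t ^ (j + 2)) (at t)"
      by (rule DERIV_cong[OF DERIV_mult[OF d_sin_power DERIV_cos]])
  qed (auto intro!: continuous_intros)
  then have "real (j + 1) * integral {0..pi} (\<lambda>t. \<phi> (t + s) * sin t ^ j) =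
      real (j + 2) * integral {0..pi} (\<lambda>t. \<phi> (t + s) * sin t ^ (j + 2))"
    by (simp add: right_diff_distrib integral_diff integral_scale integrable_continuous_interval
        continuous_on_compose2[OF \<phi>] continuous_intros)
  then show ?thesis
    by (simp only: vanish) simp
qed

lemma half_turn_of_vanishing_mean:
  fixes \<phi> :: "real \<Rightarrow> real"
  assumes "continuous_on UNIV \<phi>" and "\<And>s. integral {0..pi} (\<lambda>t. \<phi> (t + s)) = 0"
  shows "\<phi> (s + pi) = \<phi> s"
proof -
  have "integral {0..pi} (\<lambda>t. \<phi> (t + s) * 0) = \<phi> (s + pi) * 1 - \<phi> s * 1"
    by (rule integral_deriv_weight_eq_boundary[where w = "\<lambda>t. 1"]) (use assms in auto)
  then show ?thesis
    by simp
qed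

lemma half_turn_of_vanishing_sin_moment:
  fixes \<phi> :: "real \<Rightarrow> real"
  assumes \<phi>: "continuous_on UNIV \<phi>"
    and vanish: "\<And>s. integral {0..pi} (\<lambda>t. \<phi> (t + s) * sin t) = 0"
  shows "\<phi> (s + pi) = - \<phi> s"
proof -
  have vanish_cos: "integral {0..pi} (\<lambda>t. \<phi> (t + s) * cos t) = 0" for s
    using integral_deriv_weight_eq_boundary[OF \<phi> DERIV_sin _ _ vanish]
    by (simp add: continuous_on_cos continuous_on_id)
  have "integral {0..pi} (\<lambda>t. \<phi> (t + s) * - sin t) = \<phi> (s + pi) * cos pi - \<phi> s * cos 0"
    by (rule integral_deriv_weight_eq_boundary[OF \<phi> DERIV_cos _ _ vanish_cos])
      (auto intro!: continuous_intros)
  then show ?thesis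
    using vanish[of s] by (simp add: integral_neg)
qed

lemma homogeneous_sin_cos_eq_0_imp_coeff_eq_0:
  fixes c :: "nat \<Rightarrow> real"
  assumes vanish: "\<And>s. (\<Sum>j\<le>m. c j * cos s ^ j * sin s ^ (m - j)) = 0" and "j \<le> m"
  shows "c j = 0"
proof -
  have "(\<Sum>j\<le>m. c j * x ^ j) = 0" for x :: real
  proof -
    define r where "r = sqrt (x\<^sup>2 + 1)"
    have "r > 0" and r_squared: "r\<^sup>2 = x\<^sup>2 + 1"
      unfolding r_def by (auto intro: add_nonneg_pos)
    have "(x / r)\<^sup>2 + (1 / r)\<^sup>2 = 1"
      using \<open>r > 0\<close> by (simp add: power_divide flip: add_divide_distrib r_squared)
    txt \<open>Dehomogenise at the point of the circle in the direction of \<open>(x, 1)\<close>.\<close>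
    then obtain s where s: "cos s = x / r" "sin s = 1 / r"
      using sincos_total_2pi by metis
    have "0 = (\<Sum>j\<le>m. c j * cos s ^ j * sin s ^ (m - j))"
      by (rule vanish[symmetric])
    also have "\<dots> = (\<Sum>j\<le>m. c j * x ^ j) / r ^ m"
      unfolding sum_divide_distrib
    proof (rule sum.cong)
      fix j assume "j \<in> {..m}"
      then have "r ^ m = r ^ j * r ^ (m - j)"
        by (simp flip: power_add)
      then show "c j * cos s ^ j * sin s ^ (m - j) = c j * x ^ j / r ^ m"
        by (simp add: s power_divide)
    qed simp
    finally show ?thesis
      using \<open>r > 0\<close> by simp
  qed
  then show ?thesis
    using polyfun_eq_0[of c m] assms(2) by blast
qed

inductive trig_poly :: "nat \<Rightarrow> (real \<Rightarrow> real) \<Rightarrow> bool" where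
  trig_poly_monomial: "a + b \<le> d \<Longrightarrow> trig_poly d (\<lambda>t. cos t ^ a * sin t ^ b)"
| trig_poly_zero: "trig_poly d (\<lambda>t. 0)"
| trig_poly_add: "trig_poly d g \<Longrightarrow> trig_poly d h \<Longrightarrow> trig_poly d (\<lambda>t. g t + h t)"
| trig_poly_cmult: "trig_poly d g \<Longrightarrow> trig_poly d (\<lambda>t. c * g t)"

lemma trig_poly_cong:
  assumes "trig_poly d g" and "\<And>t. g t = h t"
  shows "trig_poly d h"
proof -
  have "g = h"
    using assms(2) by (rule ext)
  with assms(1) show ?thesis
    by simp
qed

lemma trig_poly_continuous: "trig_poly d g \<Longrightarrow> continuous_on UNIV g"
  by (induction rule: trig_poly.induct) (auto intro!: continuous_intros)

lemma trig_poly_mono: "trig_poly d g \<Longrightarrow> d \<le> e \<Longrightarrow> trig_poly e g"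
  by (induction rule: trig_poly.induct) (auto intro: trig_poly.intros)

lemma trig_poly_monomial_mult:
  "trig_poly e h \<Longrightarrow> a + b \<le> d \<Longrightarrow> trig_poly (d + e) (\<lambda>t. cos t ^ a * sin t ^ b * h t)"
proof (induction rule: trig_poly.induct)
  case (trig_poly_monomial a' b' e)
  then have "trig_poly (d + e) (\<lambda>t. cos t ^ (a + a') * sin t ^ (b + b'))"
    by (intro trig_poly.trig_poly_monomial) simp
  then show ?case
    by (rule trig_poly_cong) (simp add: power_add algebra_simps)
next
  case (trig_poly_add e g h)
  then show ?case
    by (auto intro: trig_poly_cong[OF trig_poly.trig_poly_add] simp: algebra_simps)
next
  case (trig_poly_cmult e g c)
  then show ?case
    by (auto intro: trig_poly_cong[OF trig_poly.trig_poly_cmult[of _ _ c]] simp: algebra_simps)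
qed (simp add: trig_poly.trig_poly_zero)

lemma trig_poly_mult: "trig_poly d g \<Longrightarrow> trig_poly e h \<Longrightarrow> trig_poly (d + e) (\<lambda>t. g t * h t)"
proof (induction rule: trig_poly.induct)
  case (trig_poly_add d g\<^sub>1 g\<^sub>2)
  then show ?case
    by (auto intro: trig_poly_cong[OF trig_poly.trig_poly_add] simp: algebra_simps)
next
  case (trig_poly_cmult d g c)
  then show ?case
    by (auto intro: trig_poly_cong[OF trig_poly.trig_poly_cmult[of _ _ c]] simp: algebra_simps)
qed (simp_all add: trig_poly_monomial_mult trig_poly.trig_poly_zero)

lemma trig_poly_one: "trig_poly d (\<lambda>t. 1)"
  using trig_poly_monomial[of 0 0 d] by simp

lemma trig_poly_sum:
  "(\<And>i. i \<in> I \<Longrightarrow> trig_poly d (g i)) \<Longrightarrow> trig_poly d (\<lambda>t. \<Sum>i\<in>I. g i t)"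
proof (induction I rule: infinite_finite_induct)
  case (insert i I)
  then show ?case
    by (auto intro: trig_poly_cong[OF trig_poly_add])
qed (simp_all add: trig_poly_zero)

lemma trig_poly_prod:
  "finite I \<Longrightarrow> (\<And>i. i \<in> I \<Longrightarrow> trig_poly (d i) (g i)) \<Longrightarrow>
    trig_poly (\<Sum>i\<in>I. d i) (\<lambda>t. \<Prod>i\<in>I. g i t)"
  by (induction I rule: finite_induct) (auto intro: trig_poly_one trig_poly_mult)

lemma trig_poly_power: "trig_poly d g \<Longrightarrow> trig_poly (n * d) (\<lambda>t. g t ^ n)"
  by (induction n) (auto intro: trig_poly_one trig_poly_mult)

lemma trig_poly_linear: "trig_poly 1 (\<lambda>t. cos t * a + sin t * b)"
proof -
  have "trig_poly 1 (\<lambda>t. a * (cos t ^ 1 * sin t ^ 0) + b * (cos t ^ 0 * sin t ^ 1))"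
    by (intro trig_poly_add trig_poly_cmult trig_poly_monomial) simp_all
  then show ?thesis
    by (rule trig_poly_cong) (simp add: mult.commute)
qed

locale vanishing_sin_moment =
  fixes \<phi> :: "real \<Rightarrow> real" and k :: nat
  assumes continuous: "continuous_on UNIV \<phi>"
    and vanish: "\<And>s. integral {0..pi} (\<lambda>t. \<phi> (t + s) * sin t ^ k) = 0"
begin

lemma vanish_same_parity:
  assumes "m \<le> k" and "even (k - m)"
  shows "integral {0..pi} (\<lambda>t. \<phi> (t + s) * sin t ^ m) = 0"
proof -
  have "integral {0..pi} (\<lambda>t. \<phi> (t + s) * sin t ^ (k - 2 * j)) = 0" if "2 * j \<le> k" for j s
    using that
  proof (induction j arbitrary: s)
    case (Suc j)
    have "k - 2 * Suc j + 2 = k - 2 * j"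
      using Suc.prems by simp
    then have "integral {0..pi} (\<lambda>t. \<phi> (t + s) * sin t ^ (k - 2 * Suc j + 2)) = 0" for s
      using Suc by simp
    then show ?case
      by (rule sin_moment_descent[OF continuous])
  qed (simp add: vanish)
  moreover obtain j where "k - m = 2 * j"
    using assms(2) by blast
  then have "m = k - 2 * j" and "2 * j \<le> k"
    using assms(1) by auto
  ultimately show ?thesis
    by simp
qed

lemma parity: "\<phi> (s + pi) = (-1) ^ k * \<phi> s"
proof (cases "even k")
  case True
  then show ?thesis
    using half_turn_of_vanishing_mean[OF continuous] vanish_same_parity[of 0] by simp
next
  case False
  then have "1 \<le> k" and "even (k - 1)"
    by (simp_all add: Suc_leI odd_pos)
  with False show ?thesis
    using half_turn_of_vanishing_sin_moment[OF continuous] vanish_same_parity[of 1] by simp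
qed

lemma periodic: "\<phi> (s + 2 * pi) = \<phi> s"
  using parity[of s] parity[of "s + pi"] by (simp add: add.assoc)

lemma integral_sin_shift_power:
  assumes "m \<le> k" and "even (k - m)"
  shows "integral {0..2*pi} (\<lambda>u. \<phi> u * sin (u + s) ^ m) = 0"
proof -
  have "continuous_on UNIV (\<lambda>u. \<phi> u * sin (u + s) ^ m)"
    by (intro continuous_intros continuous)
  moreover have "\<phi> (t + 2 * pi) * sin (t + 2 * pi + s) ^ m = \<phi> t * sin (t + s) ^ m" for t
    using sin_periodic[of "t + s"] by (simp add: periodic add_ac)
  ultimately have "integral {0..2*pi} (\<lambda>u. \<phi> u * sin (u + s) ^ m) =
      integral {0..2*pi} (\<lambda>t. \<phi> (t - s) * sin t ^ m)"
    using integral_periodic_shift[where h = "\<lambda>u. \<phi> u * sin (u + s) ^ m" and s = "- s"] by simp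
  also have "\<dots> = (1 + (-1) ^ k * (-1) ^ m) * integral {0..pi} (\<lambda>t. \<phi> (t - s) * sin t ^ m)"
  proof (rule integral_two_pi_half_turn)
    show "\<phi> (t + pi - s) * sin (t + pi) ^ m = (-1) ^ k * (-1) ^ m * (\<phi> (t - s) * sin t ^ m)" for t
      using parity[of "t - s"] by (simp add: power_minus' algebra_simps)
  qed (auto intro!: continuous_intros continuous_on_compose2[OF continuous])
  also have "integral {0..pi} (\<lambda>t. \<phi> (t - s) * sin t ^ m) = 0"
    using vanish_same_parity[OF assms, of "- s"] by simp
  finally show ?thesis
    by simp
qed

lemma integral_monomial_same_parity:
  assumes "m \<le> k" and "even (k - m)" and "j \<le> m"
  shows "integral {0..2*pi} (\<lambda>u. \<phi> u * (sin u ^ j * cos u ^ (m - j))) = 0"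
proof -
  define I where "I j = integral {0..2*pi} (\<lambda>u. \<phi> u * (sin u ^ j * cos u ^ (m - j)))" for j
  have "(\<Sum>j\<le>m. (of_nat (m choose j) * I j) * cos s ^ j * sin s ^ (m - j)) = 0" for s
  proof -
    have expand: "\<phi> u * sin (u + s) ^ m =
        (\<Sum>j\<le>m. (of_nat (m choose j) * cos s ^ j * sin s ^ (m - j)) *
          (\<phi> u * (sin u ^ j * cos u ^ (m - j))))" for u
      unfolding sin_add binomial_ring sum_distrib_left
      by (rule sum.cong) (simp_all add: power_mult_distrib algebra_simps)
    have "integral {0..2*pi} (\<lambda>u. \<phi> u * sin (u + s) ^ m) =
        (\<Sum>j\<le>m. (of_nat (m choose j) * cos s ^ j * sin s ^ (m - j)) * I j)"
      unfolding I_def expand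
      by (subst integral_sum)
        (auto intro!: integrable_continuous_interval continuous_intros
          continuous_on_subset[OF continuous])
    then show ?thesis
      using integral_sin_shift_power[OF assms(1,2), of s] by (simp add: mult_ac)
  qed
  from homogeneous_sin_cos_eq_0_imp_coeff_eq_0[OF this assms(3)] show ?thesis
    using assms(3) by (simp add: I_def)
qed

lemma integral_monomial:
  assumes "a + b \<le> k"
  shows "integral {0..2*pi} (\<lambda>t. cos t ^ a * sin t ^ b * \<phi> t) = 0"
proof (cases "even (k - (a + b))")
  case True
  from integral_monomial_same_parity[OF assms True, of b] show ?thesis
    by (simp add: mult_ac)
next
  case False
  then have "odd (a + b + k)"
    using assms by (simp add: even_diff_nat)
  have "integral {0..2*pi} (\<lambda>t. cos t ^ a * sin t ^ b * \<phi> t) =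
      (1 + (-1) ^ (a + b + k)) * integral {0..pi} (\<lambda>t. cos t ^ a * sin t ^ b * \<phi> t)"
    by (rule integral_two_pi_half_turn)
      (auto intro!: continuous_intros continuous simp: parity power_add power_minus' algebra_simps)
  with \<open>odd (a + b + k)\<close> show ?thesis
    by simp
qed

lemma integral_trig_poly:
  "trig_poly d g \<Longrightarrow> d \<le> k \<Longrightarrow> integral {0..2*pi} (\<lambda>t. g t * \<phi> t) = 0"
proof (induction rule: trig_poly.induct)
  case (trig_poly_monomial a b d)
  then show ?case
    by (simp add: integral_monomial)
next
  case (trig_poly_add d g h)
  have "(\<lambda>t. g t * \<phi> t) integrable_on {0..2*pi}" "(\<lambda>t. h t * \<phi> t) integrable_on {0..2*pi}"
    using trig_poly_add.hyps[THEN trig_poly_continuous]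
    by (auto intro!: integrable_continuous_interval continuous_intros continuous
        intro: continuous_on_subset)
  with trig_poly_add show ?case
    by (simp add: distrib_right integral_add)
qed (simp_all add: mult.assoc)

end

lemma smooth_fun_continuous: "smooth_fun g \<Longrightarrow> continuous_on UNIV g"
  by (erule smooth_fun.cases)
    (simp add: continuous_at_imp_continuous_on differentiable_imp_continuous_within)

lemma geod_nth: "geod u v t $ i = cos t * u $ i + sin t * v $ i"
  by (simp add: geod_def)

lemma geod'_nth: "geod' u v t $ i = - sin t * u $ i + cos t * v $ i"
  by (simp add: geod'_def)

lemma
  assumes "orthonormal2 u v"
  shows norm_geod: "norm (geod u v t) = 1"
    and norm_geod': "norm (geod' u v t) = 1"
    and inner_geod'_geod: "geod' u v t \<bullet> geod u v t = 0"
proof -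
  have "u \<bullet> u = 1" "v \<bullet> v = 1" "u \<bullet> v = 0" "v \<bullet> u = 0"
    using assms by (auto simp: orthonormal2_def norm_eq_1 inner_commute)
  then show "norm (geod u v t) = 1" "norm (geod' u v t) = 1" "geod' u v t \<bullet> geod u v t = 0"
    by (auto simp: norm_eq_1 geod_def geod'_def inner_add_left inner_add_right algebra_simps
        simp flip: power2_eq_square)
qed

lemma orthonormal2_geod: "orthonormal2 u v \<Longrightarrow> orthonormal2 (geod u v s) (geod' u v s)"
  by (simp add: orthonormal2_def norm_geod norm_geod' inner_geod'_geod
      inner_commute[of "geod u v s"])

lemma geod_shift:
  "geod (geod u v s) (geod' u v s) t = geod u v (t + s)"
  "geod' (geod u v s) (geod' u v s) t = geod' u v (t + s)"
  by (simp_all add: vec_eq_iff geod_nth geod'_nth cos_add sin_add algebra_simps)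

lemma continuous_on_cotensor_geod:
  assumes "smooth_sym_cotensor_sphere F" and "orthonormal2 u v"
  shows "continuous_on UNIV (\<lambda>t. F (geod u v t) (geod' u v t) (geod' u v t))"
proof -
  obtain f :: "'a \<Rightarrow> 'a \<Rightarrow> real^'a \<Rightarrow> real" where smooth: "\<And>i j. smooth_fun (f i j)"
    and F: "\<And>x u v. x \<in> sphere 0 1 \<Longrightarrow> u \<bullet> x = 0 \<Longrightarrow> v \<bullet> x = 0 \<Longrightarrow>
      F x u v = (\<Sum>i\<in>UNIV. \<Sum>j\<in>UNIV. f i j x * u $ i * v $ j)"
    using assms(1) unfolding smooth_sym_cotensor_sphere_def by blast
  have "continuous_on UNIV (geod u v)"
    unfolding geod_def by (intro continuous_intros)
  then have "continuous_on UNIV (\<lambda>t. \<Sum>i\<in>UNIV. \<Sum>j\<in>UNIV.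
      f i j (geod u v t) * geod' u v t $ i * geod' u v t $ j)"
    unfolding geod'_nth
    by (intro continuous_intros continuous_on_compose2[OF smooth_fun_continuous[OF smooth]]) auto
  then show ?thesis
    by (rule continuous_on_eq) (simp add: F norm_geod inner_geod'_geod assms(2))
qed

lemma trig_poly_poly_fun_geod:
  assumes "poly_fun_deg k p"
  shows "trig_poly k (\<lambda>t. p (geod u v t))"
proof -
  obtain c where p: "p = (\<lambda>x. \<Sum>\<alpha>\<in>{\<alpha>. sum \<alpha> UNIV \<le> k}. c \<alpha> * (\<Prod>i\<in>UNIV. (x $ i) ^ \<alpha> i))"
    using assms unfolding poly_fun_deg_def by blast
  have "trig_poly k (\<lambda>t. c \<alpha> * (\<Prod>i\<in>UNIV. (cos t * u $ i + sin t * v $ i) ^ \<alpha> i))"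
    if "sum \<alpha> UNIV \<le> k" for \<alpha> :: "'a \<Rightarrow> nat"
  proof -
    have "trig_poly (\<Sum>i\<in>UNIV. \<alpha> i * 1) (\<lambda>t. \<Prod>i\<in>UNIV. (cos t * u $ i + sin t * v $ i) ^ \<alpha> i)"
      by (intro trig_poly_prod trig_poly_power trig_poly_linear) simp
    with that show ?thesis
      by (auto intro: trig_poly_cmult trig_poly_mono)
  qed
  then show ?thesis
    unfolding p geod_nth by (auto intro: trig_poly_sum)
qed

theorem lemma3p2:
  fixes F :: "real^'n \<Rightarrow> real^'n \<Rightarrow> real^'n \<Rightarrow> real" and k :: nat
  assumes "smooth_sym_cotensor_sphere F"
    and "\<And>u v. orthonormal2 u v \<Longrightarrow>
           integral {0..pi} (\<lambda>t. F (geod u v t) (geod' u v t) (geod' u v t) * (sin t) ^ k) = 0"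
  shows "(\<forall>u v. orthonormal2 u v \<longrightarrow> (\<forall>t.
            F (geod u v t) (geod' u v t) (geod' u v t) =
            (-1) ^ k * F (geod u v (t + pi)) (geod' u v (t + pi)) (geod' u v (t + pi))))
         \<and> (\<forall>u v p. orthonormal2 u v \<longrightarrow> poly_fun_deg k p \<longrightarrow>
            integral {0..2*pi} (\<lambda>t. p (geod u v t) * F (geod u v t) (geod' u v t) (geod' u v t)) = 0)"
proof -
  have "(\<forall>t. \<phi> t = (-1) ^ k * \<phi> (t + pi)) \<and>
      (\<forall>p. poly_fun_deg k p \<longrightarrow> integral {0..2*pi} (\<lambda>t. p (geod u v t) * \<phi> t) = 0)"
    if uv: "orthonormal2 u v" and \<phi>_def: "\<phi> = (\<lambda>t. F (geod u v t) (geod' u v t) (geod' u v t))"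
    for u v \<phi>
  proof -
    interpret vanishing_sin_moment \<phi> k
    proof
      show "continuous_on UNIV \<phi>"
        unfolding \<phi>_def using assms(1) uv by (rule continuous_on_cotensor_geod)
      show "integral {0..pi} (\<lambda>t. \<phi> (t + s) * sin t ^ k) = 0" for s
        using assms(2)[OF orthonormal2_geod[OF uv, of s]] by (simp add: \<phi>_def geod_shift)
    qed
    show ?thesis
      using parity integral_trig_poly[OF trig_poly_poly_fun_geod order.refl] by auto
  qed
  then show ?thesis
    by blast
qed

end
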